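(* Let $\mu=\prod_{i=1}^\infty\nu_i$ be a product probability measure on $[0,1]^{\mathbb{N}}$ and, for each $i$, let $m_i:=\int_{[0,1]}x\,d\nu_i(x)$, $m_i^{(2)}:=\int_{[0,1]}x^2\,d\nu_i(x)$ and $\epsilon_{1i}:=\nu_i(\{1\})$. Suppose $$\limsup_{n\to\infty}\frac1{\sqrt n}\sum_{i=1}^n\left(m_i-\tfrac12\right)<\infty,\qquad \liminf_{n\to\infty}\frac1n\sum_{i=1}^n\left(m_i-m_i^{(2)}\right)>0,\qquad \limsup_{n\to\infty}\frac1n\sum_{i=1}^n\epsilon_{1i}<\frac12,$$ and that $\sigma_{T,n}:=\left(\sum_{i=1}^n\int_{[0,1]}(x-m_i)^2\,d\nu_i(x)\right)^{1/2}\to\infty$ as $n\to\infty$. Then $\mu(\mathcal{C}_I)=0$.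
   Context: For a sequence $(p_i)_{i=1}^\infty\in[0,1]^{\mathbb{N}}$ let $X_1,X_2,\dots$ be independent random variables with values in $\{0,1\}$ and $\mathbb{P}(X_i=1)=p_i$. The sequence satisfies the Condorcet Jury Property if $\lim_{n\to\infty,\ n\text{ odd}}\mathbb{P}\left(\sum_{i=1}^nX_i>\frac n2\right)=1$; $\mathcal{C}_I$ is the set of sequences satisfying it. *)

theory Defs
  imports "HOL-Probability.Probability"
begin

text \<open>Sequences are indexed from 0 here: p 0, p 1, ... correspond to p_1, p_2, ... of the paper.
  The probability that strictly more than n/2 of the first n independent Bernoulli(p i)
  variables equal 1.\<close>
definition majority_prob :: "(nat \<Rightarrow> real) \<Rightarrow> nat \<Rightarrow> real" where
  "majority_prob p n =
     measure_pmf.prob (Pi_pmf {..<n} False (\<lambda>i. bernoulli_pmf (p i)))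
       {X. real (card {i\<in>{..<n}. X i}) > real n / 2}"

definition CJP :: "(nat \<Rightarrow> real) set" where
  "CJP = {p. (\<forall>i. p i \<in> {0..1}) \<and> (\<lambda>k. majority_prob p (2 * k + 1)) \<longlonglongrightarrow> 1}"

end

theory Submission
  imports Defs
begin

text \<open>Making finitely many voters infallible can only raise the majority probability, so \<open>CJP\<close> is
  contained in \<open>CJP_tail\<close>, the set of competence sequences that have the Condorcet property once
  some finite prefix of voters is made infallible. Membership in \<open>CJP_tail\<close> does not depend on
  any finite set of coordinates, so by Kolmogorov's 0-1 law it has measure 0 or 1.

  Averaging the majority probability over the product measure yields the majority probability
  of independent voters with the mean competences \<open>m\<^sub>i\<close>. Their total exceeds \<open>n/2\<close> by only
  \<open>O(\<surd>n)\<close> while their variance grows linearly, so splitting the voters into boundedly many blocks,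
  each of which falls half a standard deviation below its mean with probability at least 1/1500
  (a fourth-moment bound), keeps that majority probability below \<open>1 - \<delta>\<close>, even after a finite
  prefix is made infallible. By dominated convergence \<open>CJP_tail\<close> has measure at most \<open>1 - \<delta>\<close>,
  hence measure 0.\<close>

section \<open>Sums of independent Bernoulli variables\<close>

text \<open>\<open>bernoulli_pmf p\<close> succeeds with probability \<open>clamp01 p\<close>; the majority probability is thus
  meaningful for every \<open>q :: nat \<Rightarrow> real\<close>, as needed for the coordinates of the product space.\<close>
definition clamp01 :: "real \<Rightarrow> real" where
  "clamp01 p = min 1 (max 0 p)"

lemma clamp01_nonneg [simp]: "0 \<le> clamp01 p"
  and clamp01_le_1 [simp]: "clamp01 p \<le> 1"
  by (auto simp: clamp01_def)

lemma clamp01_id [simp]: "0 \<le> p \<Longrightarrow> p \<le> 1 \<Longrightarrow> clamp01 p = p"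
  by (simp add: clamp01_def)

lemma borel_measurable_clamp01 [measurable]: "clamp01 \<in> borel_measurable borel"
  unfolding clamp01_def by measurable

lemma pmf_bernoulli_pmf_clamp01:
  "pmf (bernoulli_pmf p) b = (if b then clamp01 p else 1 - clamp01 p)"
proof -
  interpret pmf_as_function .
  show ?thesis unfolding clamp01_def by transfer simp
qed

definition success_count :: "(nat \<Rightarrow> real) \<Rightarrow> nat set \<Rightarrow> nat pmf" where
  "success_count q I =
     map_pmf (\<lambda>X. card {i\<in>I. X i}) (Pi_pmf I False (\<lambda>i. bernoulli_pmf (q i)))"

abbreviation success_expectation :: "(nat \<Rightarrow> real) \<Rightarrow> nat set \<Rightarrow> (nat \<Rightarrow> real) \<Rightarrow> real" where
  "success_expectation q I f \<equiv> measure_pmf.expectation (success_count q I) f"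

abbreviation success_prob :: "(nat \<Rightarrow> real) \<Rightarrow> nat set \<Rightarrow> nat set \<Rightarrow> real" where
  "success_prob q I A \<equiv> measure_pmf.prob (success_count q I) A"

lemma success_count_empty [simp]: "success_count q {} = return_pmf 0"
  by (simp add: success_count_def)

lemma success_count_singleton: "success_count q {i} = map_pmf of_bool (bernoulli_pmf (q i))"
  unfolding success_count_def Pi_pmf_singleton map_pmf_comp
  by (intro map_pmf_cong refl) auto

lemma success_count_Un:
  assumes "finite A" "finite B" "A \<inter> B = {}"
  shows "success_count q (A \<union> B) =
           map_pmf (\<lambda>(a, b). a + b) (pair_pmf (success_count q A) (success_count q B))"
proof -
  have card_eq: "card {i\<in>A \<union> B. if i \<in> A then f i else g i} = card {i\<in>A. f i} + card {i\<in>B. g i}"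
    for f g :: "nat \<Rightarrow> bool"
  proof -
    have "{i\<in>A \<union> B. if i \<in> A then f i else g i} = {i\<in>A. f i} \<union> {i\<in>B. g i}"
      using assms(3) by auto
    then show ?thesis using assms by (simp add: card_Un_disjoint disjoint_iff)
  qed
  let ?P = "\<lambda>J. Pi_pmf J False (\<lambda>i. bernoulli_pmf (q i))"
  have "success_count q (A \<union> B) =
      map_pmf (\<lambda>X. card {i\<in>A \<union> B. X i})
        (map_pmf (\<lambda>(f, g) i. if i \<in> A then f i else g i) (pair_pmf (?P A) (?P B)))"
    unfolding success_count_def using assms by (simp add: Pi_pmf_union)
  also have "\<dots> = map_pmf (\<lambda>(f, g). card {i\<in>A. f i} + card {i\<in>B. g i}) (pair_pmf (?P A) (?P B))"
    unfolding map_pmf_comp by (intro map_pmf_cong refl) (simp only: split_beta card_eq)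
  also have "\<dots> = map_pmf (\<lambda>(a, b). a + b) (pair_pmf (success_count q A) (success_count q B))"
    unfolding success_count_def map_pair[symmetric] by (simp add: map_pmf_comp case_prod_unfold)
  finally show ?thesis .
qed

lemma set_pmf_success_count: "finite I \<Longrightarrow> set_pmf (success_count q I) \<subseteq> {..card I}"
  unfolding success_count_def by (auto intro!: card_mono)

lemma finite_set_pmf_success_count [simp]: "finite I \<Longrightarrow> finite (set_pmf (success_count q I))"
  using set_pmf_success_count finite_subset by blast

lemma integrable_success_count [simp]:
  "finite I \<Longrightarrow> integrable (success_count q I) (f :: nat \<Rightarrow> real)"
  by (simp add: integrable_measure_pmf_finite)

lemma expectation_pair_pmf_finite:
  fixes g :: "'a \<times> 'b \<Rightarrow> real"
  assumes "finite (set_pmf A)" "finite (set_pmf B)"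
  shows "measure_pmf.expectation (pair_pmf A B) g =
         measure_pmf.expectation A (\<lambda>a. measure_pmf.expectation B (\<lambda>b. g (a, b)))"
proof -
  have "measure_pmf.expectation (pair_pmf A B) g =
      (\<Sum>x\<in>set_pmf A \<times> set_pmf B. g x * pmf (pair_pmf A B) x)"
    using assms by (intro integral_measure_pmf_real) auto
  also have "\<dots> = (\<Sum>a\<in>set_pmf A. \<Sum>b\<in>set_pmf B. g (a, b) * (pmf A a * pmf B b))"
    by (subst sum.cartesian_product) (auto intro!: sum.cong simp: pmf_pair)
  also have "\<dots> = (\<Sum>a\<in>set_pmf A. (\<Sum>b\<in>set_pmf B. g (a, b) * pmf B b) * pmf A a)"
    by (simp add: sum_distrib_left sum_distrib_right mult_ac)
  also have "\<dots> = measure_pmf.expectation A (\<lambda>a. measure_pmf.expectation B (\<lambda>b. g (a, b)))"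
    using assms by (simp add: integral_measure_pmf_real[where A = "set_pmf A"]
                              integral_measure_pmf_real[where A = "set_pmf B"])
  finally show ?thesis .
qed

lemma success_expectation_insert:
  assumes "finite I" "x \<notin> I"
  shows "success_expectation q (insert x I) f =
           (1 - clamp01 (q x)) * success_expectation q I f
             + clamp01 (q x) * success_expectation q I (\<lambda>k. f (k + 1))"
proof -
  have single: "measure_pmf.expectation (success_count q {x}) (\<lambda>b. f (a + b)) =
      (1 - clamp01 (q x)) * f a + clamp01 (q x) * f (a + 1)" for a
    unfolding success_count_singleton
    by (simp add: integral_measure_pmf_real[where A = "{True, False}"]
                  pmf_bernoulli_pmf_clamp01 algebra_simps)
  have "success_count q (insert x I) =
      map_pmf (\<lambda>(a, b). a + b) (pair_pmf (success_count q I) (success_count q {x}))"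
    using assms success_count_Un[of I "{x}" q] by simp
  then have "success_expectation q (insert x I) f =
      success_expectation q I (\<lambda>a. (1 - clamp01 (q x)) * f a + clamp01 (q x) * f (a + 1))"
    using assms by (simp add: expectation_pair_pmf_finite case_prod_unfold single)
  then show ?thesis
    using assms by simp
qed

definition success_mean :: "(nat \<Rightarrow> real) \<Rightarrow> nat set \<Rightarrow> real" where
  "success_mean q I = (\<Sum>i\<in>I. clamp01 (q i))"

definition success_var :: "(nat \<Rightarrow> real) \<Rightarrow> nat set \<Rightarrow> real" where
  "success_var q I = (\<Sum>i\<in>I. clamp01 (q i) * (1 - clamp01 (q i)))"

lemma success_var_nonneg: "0 \<le> success_var q I"
  unfolding success_var_def by (intro sum_nonneg) simp

lemma success_var_le_card: "success_var q I \<le> card I / 4"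
proof -
  have "p * (1 - p) \<le> 1 / 4" for p :: real
    using zero_le_square[of "p - 1 / 2"] by (simp add: power2_eq_square algebra_simps)
  then have "success_var q I \<le> (\<Sum>i\<in>I. 1 / 4)"
    unfolding success_var_def by (intro sum_mono)
  then show ?thesis by simp
qed

lemma success_expectation_shifted_powers:
  assumes "finite I"
  shows "success_expectation q I (\<lambda>c. Z c + a) = success_expectation q I Z + a"
    and "success_expectation q I (\<lambda>c. (Z c + a)^2) =
           success_expectation q I (\<lambda>c. Z c^2) + 2*a * success_expectation q I Z + a^2" (is ?P2)
    and "success_expectation q I (\<lambda>c. (Z c + a)^3) =
           success_expectation q I (\<lambda>c. Z c^3) + 3*a * success_expectation q I (\<lambda>c. Z c^2)
             + 3*a^2 * success_expectation q I Z + a^3" (is ?P3)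
    and "success_expectation q I (\<lambda>c. (Z c + a)^4) =
           success_expectation q I (\<lambda>c. Z c^4) + 4*a * success_expectation q I (\<lambda>c. Z c^3)
             + 6*a^2 * success_expectation q I (\<lambda>c. Z c^2) + 4*a^3 * success_expectation q I Z + a^4"
      (is ?P4)
proof -
  have "(z + a)^2 = z^2 + 2*a*z + a^2"
    and "(z + a)^3 = z^3 + 3*a*z^2 + 3*a^2*z + a^3"
    and "(z + a)^4 = z^4 + 4*a*z^3 + 6*a^2*z^2 + 4*a^3*z + a^4" for z :: real
    by (simp_all add: algebra_simps power2_eq_square power3_eq_cube power4_eq_xxxx)
  then show "success_expectation q I (\<lambda>c. Z c + a) = success_expectation q I Z + a" ?P2 ?P3 ?P4
    using assms by simp_all
qed

lemma bernoulli_moment_bounds: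
  fixes p :: real
  assumes "0 \<le> p" "p \<le> 1"
  shows "\<bar>p * (1 - p) * (1 - 2 * p)\<bar> \<le> p * (1 - p)"
    and "p * (1 - p) * (p^3 + (1 - p)^3) \<le> p * (1 - p)"
proof -
  have w: "0 \<le> p * (1 - p)" using assms by simp
  have "\<bar>1 - 2 * p\<bar> \<le> 1" using assms by simp
  then show "\<bar>p * (1 - p) * (1 - 2 * p)\<bar> \<le> p * (1 - p)"
    using w by (simp add: abs_mult mult_left_le)
  have "p^3 \<le> p^1" "(1 - p)^3 \<le> (1 - p)^1"
    using assms by (intro power_decreasing; simp)+
  then show "p * (1 - p) * (p^3 + (1 - p)^3) \<le> p * (1 - p)"
    using w by (simp add: mult_left_le)
qed

lemma success_count_central_moments:
  fixes q :: "nat \<Rightarrow> real" and I :: "nat set"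
  assumes "finite I"
  defines "Z \<equiv> \<lambda>c. real c - success_mean q I"
  shows "success_expectation q I Z = 0
    \<and> success_expectation q I (\<lambda>c. Z c^2) = success_var q I
    \<and> \<bar>success_expectation q I (\<lambda>c. Z c^3)\<bar> \<le> success_var q I
    \<and> success_expectation q I (\<lambda>c. Z c^4) \<le> 3 * (success_var q I)^2 + success_var q I"
  unfolding Z_def using assms(1)
proof (induction rule: finite_induct)
  case empty
  then show ?case by (simp add: success_mean_def success_var_def)
next
  case (insert x I)
  define p where "p = clamp01 (q x)"
  define V where "V = success_var q I"
  define Z where "Z = (\<lambda>c. real c - success_mean q I)"
  let ?E = "success_expectation q I"
  have V_nonneg: "0 \<le> V" unfolding V_def by (rule success_var_nonneg)
  have mean: "success_mean q (insert x I) = success_mean q I + p"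
    and var: "success_var q (insert x I) = V + p * (1 - p)"
    using insert by (simp_all add: success_mean_def success_var_def p_def V_def)
  have M1: "?E Z = 0" and M2: "?E (\<lambda>c. Z c^2) = V" and M3: "\<bar>?E (\<lambda>c. Z c^3)\<bar> \<le> V"
    and M4: "?E (\<lambda>c. Z c^4) \<le> 3 * V^2 + V"
    using insert.IH unfolding Z_def V_def by auto
  have step: "success_expectation q (insert x I) (\<lambda>c. (real c - success_mean q (insert x I))^k) =
      (1 - p) * ?E (\<lambda>c. (Z c + (-p))^k) + p * ?E (\<lambda>c. (Z c + (1 - p))^k)" for k
    unfolding mean using insert.hyps
    by (subst success_expectation_insert) (auto simp: Z_def p_def algebra_simps)
  note expand = success_expectation_shifted_powers[OF insert.hyps(1), of q Z]
  have p01: "0 \<le> p" "p \<le> 1" unfolding p_def by simp_all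
  have "success_expectation q (insert x I) (\<lambda>c. real c - success_mean q (insert x I)) = 0"
    using step[of 1] unfolding power_one_right expand M1 by (simp add: algebra_simps)
  moreover have "success_expectation q (insert x I) (\<lambda>c. (real c - success_mean q (insert x I))^2) =
      V + p * (1 - p)"
    unfolding step expand M1 M2 by (simp add: algebra_simps power2_eq_square)
  moreover have "success_expectation q (insert x I) (\<lambda>c. (real c - success_mean q (insert x I))^3) =
      ?E (\<lambda>c. Z c^3) + p * (1 - p) * (1 - 2 * p)"
    unfolding step expand M1 M2 by (simp add: algebra_simps power2_eq_square power3_eq_cube)
  moreover have "success_expectation q (insert x I) (\<lambda>c. (real c - success_mean q (insert x I))^4) =
      ?E (\<lambda>c. Z c^4) + 6 * V * (p * (1 - p)) + p * (1 - p) * (p^3 + (1 - p)^3)"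
    unfolding step expand M1 M2
    by (simp add: algebra_simps power2_eq_square power3_eq_cube power4_eq_xxxx)
  moreover have "3 * V^2 + V + 6 * V * w + w \<le> 3 * (V + w)^2 + (V + w)" for w
    by (simp add: power2_eq_square algebra_simps)
  ultimately show ?case
    using M3 M4 bernoulli_moment_bounds[OF p01] unfolding var by (smt (verit))
qed

lemma success_expectation_le_prob:
  assumes "finite I" "\<And>c. g c \<le> indicator A c"
  shows "success_expectation q I g \<le> success_prob q I A"
proof -
  have "success_expectation q I g \<le> success_expectation q I (indicator A)"
    using assms by (intro integral_mono) auto
  then show ?thesis by simp
qed

definition quartic :: "real \<Rightarrow> real \<Rightarrow> real" where
  "quartic s z = (z + s/2) * (z + 10 * s) * (z - 2 * s)^2"

lemma quartic_le_indicator: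
  assumes "s > 0"
  shows "- quartic s z \<le> 3312 * s^4 * indicator {..(-s/2)} z"
proof (cases "-10 * s < z \<and> z \<le> -s/2")
  case True
  define a where "a = -(z + s/2)"
  define b where "b = z + 10 * s"
  have ab: "0 \<le> a" "0 \<le> b" "a + b = 19/2 * s" using True by (auto simp: a_def b_def)
  have "a * b \<le> ((a + b) / 2)^2"
    using zero_le_square[of "a - b"] by (simp add: power2_eq_square field_simps)
  then have "a * b \<le> (19/4 * s)^2" using ab(3) by simp
  moreover have "(z - 2 * s)^2 \<le> (12 * s)^2"
    using True assms by (subst abs_le_square_iff[symmetric]) auto
  ultimately have "a * b * (z - 2 * s)^2 \<le> (19/4 * s)^2 * (12 * s)^2"
    using ab by (intro mult_mono) auto
  also have "\<dots> \<le> 3312 * s^4" using assms by (simp add: power2_eq_square power4_eq_xxxx)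
  finally have "a * b * (z - 2 * s)^2 \<le> 3312 * s^4" .
  moreover have "a * b * (z - 2 * s)^2 = - quartic s z"
    by (simp add: a_def b_def quartic_def algebra_simps)
  ultimately show ?thesis
    using True by simp
next
  case False
  have "0 \<le> (z + s/2) * (z + 10 * s)"
  proof (cases "z \<le> -s/2")
    case True
    then show ?thesis using False by (intro mult_nonpos_nonpos) auto
  next
    case False
    then show ?thesis using assms by (intro mult_nonneg_nonneg) auto
  qed
  then have "0 \<le> quartic s z" by (simp add: quartic_def)
  moreover have "0 \<le> 3312 * s^4 * indicator {..(-s/2)} z" using assms by simp
  ultimately show ?thesis by linarith
qed

lemma expectation_quartic_le:
  assumes "finite I" "success_var q I \<ge> 1"
  shows "success_expectation q I (\<lambda>c. quartic (sqrt (success_var q I)) (real c - success_mean q I))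
           \<le> - 5/2 * sqrt (success_var q I)^4"
proof -
  define V where "V = success_var q I"
  define s where "s = sqrt V"
  define Z where "Z = (\<lambda>c. real c - success_mean q I)"
  let ?E = "success_expectation q I"
  have s: "s \<ge> 1" "s^2 = V" "s^4 = V^2"
    using assms(2) by (simp_all add: s_def V_def power4_eq_xxxx power2_eq_square)
  have M: "?E Z = 0" "?E (\<lambda>c. Z c^2) = V" "\<bar>?E (\<lambda>c. Z c^3)\<bar> \<le> V" "?E (\<lambda>c. Z c^4) \<le> 3 * V^2 + V"
    using success_count_central_moments[OF assms(1), of q] unfolding Z_def V_def by auto
  have "s * ?E (\<lambda>c. Z c^3) \<le> s * V"
    using M(3) s by (intro mult_left_mono) auto
  also have "s * V \<le> V * V"
    using s by (intro mult_right_mono) (auto simp: power2_eq_square)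
  finally have third: "s * ?E (\<lambda>c. Z c^3) \<le> s^4"
    using s by (simp add: power2_eq_square)
  have "V \<le> V^2"
    using assms(2) by (simp add: V_def power2_eq_square)
  then have fourth: "?E (\<lambda>c. Z c^4) \<le> 4 * s^4"
    using M(4) s by linarith
  have expand: "quartic s z = z^4 + 13/2 * s * z^3 + (-33) * s^2 * z^2 + 22 * s^3 * z + 20 * s^4"
    for z by (simp add: quartic_def power2_eq_square power3_eq_cube power4_eq_xxxx algebra_simps)
  have "?E (\<lambda>c. quartic s (Z c)) = ?E (\<lambda>c. Z c^4) + 13/2 * s * ?E (\<lambda>c. Z c^3)
      + (-33) * s^2 * ?E (\<lambda>c. Z c^2) + 22 * s^3 * ?E Z + 20 * s^4"
    unfolding expand using assms(1) by simp
  also have "\<dots> \<le> - 5/2 * s^4"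
  proof -
    have "s^2 * V = s^4" using s by (simp add: power2_eq_square)
    then show ?thesis
      unfolding M(1,2) using third fourth by (simp add: mult.assoc)
  qed
  finally show ?thesis
    unfolding s_def Z_def V_def .
qed

text \<open>Anti-concentration from the fourth moment: the quartic is negative only on
  \<open>(-10s, -s/2)\<close>, where it is at least \<open>-3312 s\<^sup>4\<close>, while its expectation is at most
  \<open>-5/2 s\<^sup>4\<close>.\<close>
lemma anticoncentration_below_mean:
  assumes "finite I" "success_var q I \<ge> 1"
  shows "success_prob q I {c. real c \<le> success_mean q I - sqrt (success_var q I) / 2} \<ge> 1 / 1500"
proof -
  define s where "s = sqrt (success_var q I)"
  define g where "g = (\<lambda>c. - quartic s (real c - success_mean q I) / (3312 * s^4))"
  have s: "s \<ge> 1" using assms(2) by (simp add: s_def)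
  have "5/2 * s^4 / (3312 * s^4) \<le> - success_expectation q I (\<lambda>c. quartic s (real c - success_mean q I))
      / (3312 * s^4)"
    using expectation_quartic_le[OF assms] s by (intro divide_right_mono) (auto simp: s_def)
  also have "\<dots> = success_expectation q I g"
    unfolding g_def by simp
  finally have "1 / 1500 \<le> success_expectation q I g"
    using s by simp
  also have "\<dots> \<le> success_prob q I {c. real c \<le> success_mean q I - s / 2}"
  proof (rule success_expectation_le_prob[OF assms(1)])
    fix c
    have "g c \<le> indicator {..(-s/2)} (real c - success_mean q I)"
      unfolding g_def using s quartic_le_indicator[of s "real c - success_mean q I"]
      by (subst pos_divide_le_eq) (auto simp: mult.commute)
    then show "g c \<le> indicator {c. real c \<le> success_mean q I - s / 2} c"
      by (simp add: indicator_def algebra_simps)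
  qed
  finally show ?thesis unfolding s_def .
qed

lemma chebyshev_success_count:
  assumes "finite I" "t > 0"
  shows "success_prob q I {c. real c \<le> success_mean q I + t} \<ge> 1 - success_var q I / t^2"
proof -
  define Z where "Z = (\<lambda>c. real c - success_mean q I)"
  have "success_expectation q I (\<lambda>c. 1 - Z c^2 / t^2) = 1 - success_var q I / t^2"
    using success_count_central_moments[OF assms(1), of q] assms(1) unfolding Z_def by simp
  moreover have "1 - Z c^2 / t^2 \<le> indicator {c. real c \<le> success_mean q I + t} c" for c
  proof (cases "real c \<le> success_mean q I + t")
    case False
    then have "t^2 \<le> Z c^2" using assms(2) by (intro power_mono) (auto simp: Z_def)
    then show ?thesis using False assms(2) by simp
  qed (use assms(2) in simp)
  ultimately show ?thesis
    using success_expectation_le_prob[OF assms(1)] by metis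
qed

lemma success_prob_Un_ge:
  assumes "finite A" "finite B" "A \<inter> B = {}"
  shows "success_prob q A {c. real c \<le> x} * success_prob q B {c. real c \<le> y}
           \<le> success_prob q (A \<union> B) {c. real c \<le> x + y}"
proof -
  have "success_prob q A {c. real c \<le> x} * success_prob q B {c. real c \<le> y} =
      measure_pmf.prob (pair_pmf (success_count q A) (success_count q B))
        ({c. real c \<le> x} \<times> {c. real c \<le> y})"
    by (simp add: measure_pmf_prob_product)
  also have "\<dots> \<le> measure_pmf.prob (pair_pmf (success_count q A) (success_count q B))
                   ((\<lambda>(a, b). a + b) -` {c. real c \<le> x + y})"
    by (intro measure_pmf.finite_measure_mono) auto
  also have "\<dots> = success_prob q (A \<union> B) {c. real c \<le> x + y}"
    using assms by (simp add: success_count_Un)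
  finally show ?thesis .
qed

lemma success_prob_UN_ge:
  assumes "finite J" "\<And>j. j \<in> J \<Longrightarrow> finite (B j)" "disjoint_family_on B J"
  shows "(\<Prod>j\<in>J. success_prob q (B j) {c. real c \<le> x j})
           \<le> success_prob q (\<Union>j\<in>J. B j) {c. real c \<le> (\<Sum>j\<in>J. x j)}"
  using assms
proof (induction rule: finite_induct)
  case (insert j J)
  have "(\<Prod>j\<in>insert j J. success_prob q (B j) {c. real c \<le> x j})
      \<le> success_prob q (B j) {c. real c \<le> x j}
          * success_prob q (\<Union>j\<in>J. B j) {c. real c \<le> (\<Sum>j\<in>J. x j)}"
    using insert by (auto intro!: mult_left_mono simp: disjoint_family_on_def)
  also have "\<dots> \<le> success_prob q (B j \<union> (\<Union>j\<in>J. B j)) {c. real c \<le> x j + (\<Sum>j\<in>J. x j)}"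
    using insert by (intro success_prob_Un_ge) (auto simp: disjoint_family_on_def)
  finally show ?case using insert by simp
qed simp

lemma majority_prob_eq_success_prob:
  "majority_prob q n = 1 - success_prob q {..<n} {c. real c \<le> real n / 2}"
proof -
  have "majority_prob q n = success_prob q {..<n} (- {c. real c \<le> real n / 2})"
    unfolding majority_prob_def success_count_def by (simp add: vimage_def not_le)
  then show ?thesis
    using measure_pmf.prob_compl[of "{c. real c \<le> real n / 2}" "success_count q {..<n}"]
    by (simp add: Compl_eq_Diff_UNIV)
qed

lemma majority_prob_le_1: "majority_prob q n \<le> 1"
  and majority_prob_nonneg: "0 \<le> majority_prob q n"
  by (simp_all add: majority_prob_def)

lemma success_mean_Un:
  "finite A \<Longrightarrow> finite B \<Longrightarrow> A \<inter> B = {} \<Longrightarrow>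
     success_mean q (A \<union> B) = success_mean q A + success_mean q B"
  by (simp add: success_mean_def sum.union_disjoint)

lemma success_var_Un:
  "finite A \<Longrightarrow> finite B \<Longrightarrow> A \<inter> B = {} \<Longrightarrow>
     success_var q (A \<union> B) = success_var q A + success_var q B"
  by (simp add: success_var_def sum.union_disjoint)

section \<open>Majority probability with a margin of order \<open>\<surd>n\<close> and linear variance\<close>

text \<open>The blocks are independent, so their bounds from \<open>anticoncentration_below_mean\<close> multiply;
  Chebyshev gives the factor 3/4 for the remaining indices.\<close>
lemma success_prob_below_blocks:
  assumes "finite G" "\<And>j. j \<in> G \<Longrightarrow> finite (B j)" "disjoint_family_on B G"
    and "\<And>j. j \<in> G \<Longrightarrow> success_var q (B j) \<ge> 1"
    and "finite R" "R \<inter> (\<Union>j\<in>G. B j) = {}"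
  shows "(1/1500)^card G * (3/4) \<le> success_prob q ((\<Union>j\<in>G. B j) \<union> R)
           {c. real c \<le> success_mean q ((\<Union>j\<in>G. B j) \<union> R)
                          - (\<Sum>j\<in>G. sqrt (success_var q (B j)) / 2) + (2 * sqrt (success_var q R) + 1)}"
proof -
  let ?U = "\<Union>j\<in>G. B j"
  let ?x = "\<lambda>j. success_mean q (B j) - sqrt (success_var q (B j)) / 2"
  define t where "t = 2 * sqrt (success_var q R) + 1"
  have "t > 0" using success_var_nonneg[of q R] by (simp add: t_def add_nonneg_pos)
  moreover have "4 * success_var q R \<le> t^2"
    using success_var_nonneg[of q R] by (simp add: t_def power2_eq_square algebra_simps)
  ultimately have t: "t > 0" "success_var q R / t^2 \<le> 1/4"
    by (simp_all add: divide_le_eq)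
  have "(1/1500)^card G = (\<Prod>j\<in>G. 1/1500 :: real)" by simp
  also have "\<dots> \<le> (\<Prod>j\<in>G. success_prob q (B j) {c. real c \<le> ?x j})"
    using assms by (intro prod_mono conjI anticoncentration_below_mean) auto
  also have "\<dots> \<le> success_prob q ?U {c. real c \<le> (\<Sum>j\<in>G. ?x j)}"
    using assms by (intro success_prob_UN_ge)
  finally have blocks: "(1/1500)^card G \<le> success_prob q ?U {c. real c \<le> (\<Sum>j\<in>G. ?x j)}" .
  have rest: "3/4 \<le> success_prob q R {c. real c \<le> success_mean q R + t}"
    using chebyshev_success_count[OF assms(5) t(1), of q] t(2) by linarith
  have "(1/1500)^card G * (3/4) \<le>
      success_prob q ?U {c. real c \<le> (\<Sum>j\<in>G. ?x j)} * success_prob q R {c. real c \<le> success_mean q R + t}"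
    using blocks rest by (intro mult_mono) auto
  also have "\<dots> \<le> success_prob q (?U \<union> R) {c. real c \<le> (\<Sum>j\<in>G. ?x j) + (success_mean q R + t)}"
    using assms by (intro success_prob_Un_ge) auto
  also have "(\<Sum>j\<in>G. ?x j) + (success_mean q R + t) =
      success_mean q (?U \<union> R) - (\<Sum>j\<in>G. sqrt (success_var q (B j)) / 2) + t"
  proof -
    have "success_mean q ?U = (\<Sum>j\<in>G. success_mean q (B j))"
      unfolding success_mean_def using assms(1-3) by (intro sum.UNION_disjoint_family) auto
    then have "success_mean q (?U \<union> R) = (\<Sum>j\<in>G. success_mean q (B j)) + success_mean q R"
      using assms by (subst success_mean_Un) (auto simp: Int_commute)
    then show ?thesis by (simp add: sum_subtractf)
  qed
  finally show ?thesis unfolding t_def .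
qed

lemma card_ge_threshold_bound:
  fixes f :: "'a \<Rightarrow> real" and a b :: real
  assumes "finite A" "\<And>j. j \<in> A \<Longrightarrow> f j \<le> a" "0 \<le> b"
  shows "(\<Sum>j\<in>A. f j) \<le> card {j\<in>A. b \<le> f j} * a + card A * b"
proof -
  let ?H = "{j\<in>A. b \<le> f j}"
  have "(\<Sum>j\<in>A. f j) = (\<Sum>j\<in>?H. f j) + (\<Sum>j\<in>A - ?H. f j)"
    using assms(1) by (subst sum.subset_diff[of ?H]) auto
  also have "\<dots> \<le> (\<Sum>j\<in>?H. a) + (\<Sum>j\<in>A - ?H. b)"
    using assms(2) by (intro add_mono sum_mono) auto
  also have "(\<Sum>j\<in>A - ?H. b) \<le> (\<Sum>j\<in>A. b)"
    using assms(1,3) by (intro sum_mono2) auto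
  finally show ?thesis by simp
qed

lemma UN_blocks_eq: "(\<Union>j<M. {j*L..<Suc j*L}) = {..<M*(L::nat)}"
proof (intro equalityI subsetI)
  fix x assume "x \<in> (\<Union>j<M. {j*L..<Suc j*L})"
  then obtain j where "j < M" "x < Suc j * L" by auto
  moreover have "Suc j * L \<le> M * L" using \<open>j < M\<close> by (intro mult_le_mono1) auto
  ultimately show "x \<in> {..<M*L}" by auto
next
  fix x assume x: "x \<in> {..<M*L}"
  then have "L > 0" by (cases L) auto
  then have "x div L < M" "x div L * L \<le> x" "x < Suc (x div L) * L"
    using x dividend_less_div_times[of L x]
    by (simp_all add: div_less_iff_less_mult mult.commute)
  then show "x \<in> (\<Union>j<M. {j*L..<Suc j*L})" by (auto intro!: bexI[of _ "x div L"])
qed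

lemma disjoint_family_on_blocks: "disjoint_family_on (\<lambda>j. {j*L..<Suc j*(L::nat)}) J"
proof (unfold disjoint_family_on_def, intro ballI impI)
  fix a b :: nat assume "a \<noteq> b"
  then have "Suc a * L \<le> b * L \<or> Suc b * L \<le> a * L"
    by (metis mult_le_mono1 not_less_eq_eq le_antisym)
  then show "{a*L..<Suc a*L} \<inter> {b*L..<Suc b*L} = {}" by auto
qed

lemma many_blocks_of_large_variance:
  fixes c :: real and n M L :: nat
  assumes "M * L \<le> n" "n < M * L + M" "c * n \<le> success_var q {..<n}" "1 \<le> c * L"
  shows "c * M \<le> card {j\<in>{..<M}. c * L / 2 \<le> success_var q {j*L..<Suc j*L}}"
proof -
  let ?g = "card {j\<in>{..<M}. c * L / 2 \<le> success_var q {j*L..<Suc j*L}}"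
  have c: "c > 0"
    using assms(4) mult_nonpos_nonneg[of c "real L"] by force
  have "success_var q {..<n} = success_var q {..<M*L} + success_var q {M*L..<n}"
    using assms(1) by (subst success_var_Un[symmetric]) (auto intro!: arg_cong[where f = "success_var q"])
  also have "success_var q {M*L..<n} \<le> M / 4"
    using success_var_le_card[of q "{M*L..<n}"] assms(2) by simp
  also have "success_var q {..<M*L} = (\<Sum>j<M. success_var q {j*L..<Suc j*L})"
    unfolding UN_blocks_eq[symmetric] success_var_def
    by (intro sum.UNION_disjoint_family disjoint_family_on_blocks) auto
  also have "\<dots> \<le> ?g * (L / 4) + M * (c * L / 2)"
  proof -
    have "success_var q {j*L..<Suc j*L} \<le> real L / 4" if "j \<in> {..<M}" for j
      using success_var_le_card[of q "{j*L..<Suc j*L}"] by simp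
    from card_ge_threshold_bound[OF finite_lessThan this, where b = "c * real L / 2"] show ?thesis
      using c by simp
  qed
  finally have "c * n \<le> ?g * (L / 4) + M * (c * L / 2) + M / 4"
    using assms(3) by linarith
  moreover have "c * (M * L) \<le> c * n" using assms(1) c by (simp flip: of_nat_mult)
  moreover have "M \<le> c * M * L" using assms(4) mult_left_mono[OF assms(4), of M] by (simp add: mult_ac)
  ultimately have "(c * M) * L \<le> ?g * L" by (simp add: algebra_simps)
  moreover have "L > 0" using assms(4) by (cases L) auto
  ultimately show ?thesis by simp
qed

lemma sum_half_sqrt_ge:
  fixes v :: "nat \<Rightarrow> real" and c C :: real and n M L :: nat
  assumes "finite G" "c * M \<le> card G" "\<And>j. j \<in> G \<Longrightarrow> c * L / 2 \<le> v j"
    and "n \<le> 2 * M * L" "16 * (C + 2)^2 \<le> M * c^3" "c > 0" "0 \<le> C"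
  shows "(C + 2) * sqrt n \<le> (\<Sum>j\<in>G. sqrt (v j) / 2)"
proof -
  have "(C + 2) * sqrt n \<le> c * M * (sqrt (c * L / 2) / 2)"
  proof (rule power2_le_imp_le)
    have "real n \<le> 2 * M * L" using assms(4) by (metis of_nat_le_iff of_nat_mult of_nat_numeral)
    then have "(C + 2)^2 * n \<le> (M * c^3 / 16) * (2 * M * L)"
      using assms(5,6) by (intro mult_mono) auto
    moreover have "(c * M * (sqrt (c * L / 2) / 2))^2 = (M * c^3 / 16) * (2 * M * L)"
      using assms(6) by (simp add: power_mult_distrib power_divide power2_eq_square power3_eq_cube)
    ultimately show "((C + 2) * sqrt n)^2 \<le> (c * M * (sqrt (c * L / 2) / 2))^2"
      by (simp add: power_mult_distrib)
  qed (use assms(6) in simp)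
  also have "\<dots> \<le> card G * (sqrt (c * L / 2) / 2)"
    using assms(2,6) by (intro mult_right_mono) auto
  also have "\<dots> \<le> (\<Sum>j\<in>G. sqrt (v j) / 2)"
    using sum_mono[of G "\<lambda>_. sqrt (c * L / 2) / 2" "\<lambda>j. sqrt (v j) / 2"] assms(3) by simp
  finally show ?thesis .
qed

lemma two_sqrt_success_var_le:
  assumes "R \<subseteq> {..<n}"
  shows "2 * sqrt (success_var q R) \<le> sqrt n"
proof -
  have "card R \<le> n"
    using card_mono[OF finite_lessThan assms] by simp
  then have "success_var q R \<le> n / 4"
    using success_var_le_card[of q R] by linarith
  then have "sqrt (success_var q R) \<le> sqrt (n / 4)"
    by (rule real_sqrt_le_mono)
  also have "sqrt (n / 4) = sqrt n / 2"
    by (simp add: real_sqrt_divide real_sqrt_eq_iff[of 4 "2^2", simplified])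
  finally show ?thesis by simp
qed

text \<open>The blocks of large variance each lose half a standard deviation with probability at
  least 1/1500, and at least \<open>c M\<close> of them together lose more than the margin \<open>C \<surd>n\<close>.\<close>
lemma success_prob_le_half_lower_bound:
  fixes c C :: real and n M L :: nat
  assumes "M * L \<le> n" "n < M * L + M" "2 \<le> c * L" "16 * (C + 2)^2 \<le> M * c^3" "0 \<le> C"
    and mean: "success_mean q {..<n} \<le> n / 2 + C * sqrt n"
    and var: "c * n \<le> success_var q {..<n}"
  shows "(1/1500)^M * (3/4) \<le> success_prob q {..<n} {k. real k \<le> real n / 2}"
proof -
  define B where "B = (\<lambda>j. {j*L..<Suc j*L})"
  define G where "G = {j\<in>{..<M}. c * L / 2 \<le> success_var q (B j)}"
  define U where "U = (\<Union>j\<in>G. B j)"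
  define R where "R = {..<n} - U"
  have c: "c > 0" "1 \<le> c * L"
    using assms(3) mult_nonpos_nonneg[of c "real L"] by force+
  have "L \<noteq> 0" using c(2) by (cases L) auto
  moreover have "M \<noteq> 0" using assms(2) by (cases M) auto
  ultimately have "M \<le> M * L" "1 \<le> M * L" by simp_all
  then have n: "1 \<le> n" "n \<le> 2 * M * L" using assms(1,2) by linarith+
  have "U \<subseteq> {..<M*L}"
    unfolding U_def G_def B_def UN_blocks_eq[symmetric] by auto
  then have UR: "U \<union> R = {..<n}" "R \<inter> U = {}" "finite R"
    using assms(1) by (auto simp: R_def)
  have card_G: "c * M \<le> card G" "card G \<le> M"
    using many_blocks_of_large_variance[OF assms(1,2) var c(2)]
    by (auto simp: G_def B_def intro: card_mono[of "{..<M}", simplified])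
  have deficit: "(C + 2) * sqrt n \<le> (\<Sum>j\<in>G. sqrt (success_var q (B j)) / 2)"
    using c(1) assms(4,5) n(2) card_G(1) by (intro sum_half_sqrt_ge) (auto simp: G_def)
  have "2 * sqrt (success_var q R) \<le> sqrt n" "1 \<le> sqrt n"
    using two_sqrt_success_var_le[of R n q] n(1) by (simp_all add: R_def)
  then have threshold: "success_mean q {..<n} - (\<Sum>j\<in>G. sqrt (success_var q (B j)) / 2)
      + (2 * sqrt (success_var q R) + 1) \<le> real n / 2"
    using mean deficit[unfolded distrib_right] by linarith
  have "(1/1500)^M * (3/4) \<le> (1/1500)^card G * (3/4 :: real)"
    using card_G(2) by (intro mult_right_mono power_decreasing) auto
  also have "\<dots> \<le> success_prob q (U \<union> R)
      {k. real k \<le> success_mean q (U \<union> R) - (\<Sum>j\<in>G. sqrt (success_var q (B j)) / 2)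
                      + (2 * sqrt (success_var q R) + 1)}"
    unfolding U_def
  proof (rule success_prob_below_blocks)
    show "disjoint_family_on B G"
      unfolding B_def by (rule disjoint_family_on_blocks)
    show "1 \<le> success_var q (B j)" if "j \<in> G" for j
      using that assms(3) by (auto simp: G_def)
    show "R \<inter> (\<Union>j\<in>G. B j) = {}"
      using UR(2) by (simp add: U_def)
  qed (use UR(3) in \<open>auto simp: G_def B_def\<close>)
  also have "\<dots> \<le> success_prob q {..<n} {k. real k \<le> real n / 2}"
    unfolding UR(1) using threshold by (intro measure_pmf.finite_measure_mono) auto
  finally show ?thesis .
qed

lemma majority_prob_bounded_away_from_one:
  fixes c C :: real
  assumes "c > 0"
  obtains \<delta> N where "\<delta> > 0"
    and "\<And>q n. N \<le> n \<Longrightarrow> success_mean q {..<n} \<le> n / 2 + C * sqrt n \<Longrightarrow>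
           c * n \<le> success_var q {..<n} \<Longrightarrow> majority_prob q n \<le> 1 - \<delta>"
proof -
  define C' where "C' = max C 0"
  define M where "M = nat \<lceil>16 * (C' + 2)^2 / c^3\<rceil> + 1"
  define K where "K = nat \<lceil>2 / c\<rceil>"
  have "16 * (C' + 2)^2 / c^3 \<le> M"
    unfolding M_def by linarith
  then have M: "16 * (C' + 2)^2 \<le> M * c^3" "M > 0"
    using assms by (simp_all add: M_def divide_le_eq)
  have "2 / c \<le> K"
    unfolding K_def by (rule real_nat_ceiling_ge)
  then have K: "2 \<le> c * K"
    using assms by (simp add: divide_le_eq mult.commute)
  have "majority_prob q n \<le> 1 - (1/1500)^M * (3/4)"
    if n: "M * K \<le> n" and mean: "success_mean q {..<n} \<le> n / 2 + C * sqrt n"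
      and var: "c * n \<le> success_var q {..<n}" for q n
  proof -
    define L where "L = n div M"
    have "M * K div M \<le> L" unfolding L_def using n by (rule div_le_mono)
    then have "K \<le> L" using M(2) by simp
    then have "c * K \<le> c * L" using assms by (simp add: mult_left_mono)
    then have "2 \<le> c * L" using K by linarith
    moreover have "M * L \<le> n" "n < M * L + M"
      using mult_div_mod_eq[of M n] mod_less_divisor[OF M(2), of n] unfolding L_def by linarith+
    moreover have "success_mean q {..<n} \<le> n / 2 + C' * sqrt n"
      using mean mult_right_mono[of C C' "sqrt n"] by (simp add: C'_def)
    ultimately have "(1/1500)^M * (3/4) \<le> success_prob q {..<n} {k. real k \<le> real n / 2}"
      using M(1) var by (intro success_prob_le_half_lower_bound) (auto simp: C'_def)
    then show ?thesis
      unfolding majority_prob_eq_success_prob by linarith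
  qed
  then show ?thesis
    using that[of "(1/1500)^M * (3/4)" "M * K"] by simp
qed

lemma success_expectation_upper_tail_mono:
  assumes "finite I" "\<And>i. clamp01 (q i) \<le> clamp01 (q' i)"
  shows "success_expectation q I (indicator {k. real k > t})
           \<le> success_expectation q' I (indicator {k. real k > t})"
  using assms(1)
proof (induction I arbitrary: t rule: finite_induct)
  case (insert x I)
  define A where "A = success_expectation q I (indicator {k. real k > t})"
  define A' where "A' = success_expectation q I (indicator {k. real k > t - 1})"
  define B where "B = success_expectation q' I (indicator {k. real k > t})"
  define B' where "B' = success_expectation q' I (indicator {k. real k > t - 1})"
  define p where "p = clamp01 (q x)"
  define p' where "p' = clamp01 (q' x)"
  have shift: "(\<lambda>k. indicator {k. real k > t} (k + 1) :: real) = indicator {k. real k > t - 1}"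
    by (auto simp: indicator_def fun_eq_iff)
  have "A \<le> A'"
    unfolding A_def A'_def using insert.hyps by (intro integral_mono) (auto simp: indicator_def)
  moreover have "p \<le> p'" "0 \<le> p'" "p' \<le> 1"
    using assms(2)[of x] by (simp_all add: p_def p'_def)
  ultimately have step: "(1 - p) * A + p * A' \<le> (1 - p') * A + p' * A'"
    using mult_right_mono[of p p' "A' - A"] by (simp add: algebra_simps)
  have "success_expectation q (insert x I) (indicator {k. real k > t}) = (1 - p) * A + p * A'"
    unfolding A_def A'_def p_def by (simp only: success_expectation_insert[OF insert.hyps] shift)
  also have "\<dots> \<le> (1 - p') * A + p' * A'" by (fact step)
  also have "\<dots> \<le> (1 - p') * B + p' * B'"
    using insert.IH \<open>0 \<le> p'\<close> \<open>p' \<le> 1\<close>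
    by (intro add_mono mult_left_mono) (auto simp: A_def A'_def B_def B'_def)
  also have "\<dots> = success_expectation q' (insert x I) (indicator {k. real k > t})"
    unfolding B_def B'_def p'_def by (simp only: success_expectation_insert[OF insert.hyps] shift)
  finally show ?case .
qed simp

lemma majority_prob_mono:
  assumes "\<And>i. clamp01 (q i) \<le> clamp01 (q' i)"
  shows "majority_prob q n \<le> majority_prob q' n"
proof -
  have "majority_prob r n = success_expectation r {..<n} (indicator {k. real k > real n / 2})" for r
    unfolding majority_prob_def success_count_def by simp
  then show ?thesis
    using success_expectation_upper_tail_mono[OF finite_lessThan assms] by presburger
qed

section \<open>Infallible prefixes\<close>

definition ones_prefix :: "nat \<Rightarrow> (nat \<Rightarrow> real) \<Rightarrow> nat \<Rightarrow> real" where
  "ones_prefix k p i = (if i < k then 1 else p i)"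

lemma ones_prefix_0 [simp]: "ones_prefix 0 p = p"
  by (simp add: ones_prefix_def fun_eq_iff)

lemma ones_prefix_absorb: "k \<le> k' \<Longrightarrow> ones_prefix k' (ones_prefix k p) = ones_prefix k' p"
  by (simp add: ones_prefix_def fun_eq_iff)

lemma ones_prefix_in_CJP: "p \<in> CJP \<Longrightarrow> ones_prefix k p \<in> CJP"
proof -
  assume "p \<in> CJP"
  then have p01: "\<And>i. p i \<in> {0..1}" and lim: "(\<lambda>n. majority_prob p (2 * n + 1)) \<longlonglongrightarrow> 1"
    by (auto simp: CJP_def)
  have "majority_prob p n \<le> majority_prob (ones_prefix k p) n" for n
    by (intro majority_prob_mono) (simp add: ones_prefix_def)
  then have "(\<lambda>n. majority_prob (ones_prefix k p) (2 * n + 1)) \<longlonglongrightarrow> 1"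
    by (intro tendsto_sandwich[OF _ _ lim tendsto_const] always_eventually allI majority_prob_le_1)
  moreover have "ones_prefix k p i \<in> {0..1}" for i
    using p01[of i] by (simp add: ones_prefix_def)
  ultimately show "ones_prefix k p \<in> CJP"
    by (simp add: CJP_def)
qed

lemma ones_prefix_in_CJP_mono: "k \<le> k' \<Longrightarrow> ones_prefix k p \<in> CJP \<Longrightarrow> ones_prefix k' p \<in> CJP"
  by (metis ones_prefix_absorb ones_prefix_in_CJP)

lemma sum_indicator_lessThan_le:
  fixes n k :: nat
  shows "(\<Sum>i<n. if i < k then 1 else 0 :: real) \<le> k"
proof -
  have "(\<Sum>i<n. if i < k then 1 else 0 :: real) = min n k"
    by (induction n) (auto simp: min_def)
  then show ?thesis by simp
qed

lemma success_mean_var_ones_prefix: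
  assumes "\<And>i. q i \<in> {0..1}"
  shows "success_mean (ones_prefix k q) {..<n} \<le> (\<Sum>i<n. q i) + k"
    and "(\<Sum>i<n. q i * (1 - q i)) - k \<le> success_var (ones_prefix k q) {..<n}"
proof -
  have q: "0 \<le> q i" "q i \<le> 1" "q i * (1 - q i) \<le> 1" for i
    using assms[of i] by (auto intro: mult_le_one)
  have "success_mean (ones_prefix k q) {..<n} \<le> (\<Sum>i<n. q i + (if i < k then 1 else 0))"
    unfolding success_mean_def using q by (intro sum_mono) (simp add: ones_prefix_def)
  then show "success_mean (ones_prefix k q) {..<n} \<le> (\<Sum>i<n. q i) + k"
    using sum_indicator_lessThan_le[where n = n and k = k] by (simp add: sum.distrib)
  have "(\<Sum>i<n. q i * (1 - q i)) \<le> (\<Sum>i<n. clamp01 (ones_prefix k q i) * (1 - clamp01 (ones_prefix k q i))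
      + (if i < k then 1 else 0))"
    using q by (intro sum_mono) (simp add: ones_prefix_def)
  then show "(\<Sum>i<n. q i * (1 - q i)) - k \<le> success_var (ones_prefix k q) {..<n}"
    using sum_indicator_lessThan_le[where n = n and k = k] by (simp add: sum.distrib success_var_def)
qed

text \<open>A finite prefix of infallible voters shifts the mean by \<open>k = o(\<surd>n)\<close> and the variance by
  \<open>k = o(n)\<close>, so it cannot bring the majority probability close to 1.\<close>
lemma eventually_majority_prob_ones_prefix_le:
  fixes q :: "nat \<Rightarrow> real" and c C :: real
  assumes q01: "\<And>i. q i \<in> {0..1}" and "c > 0"
    and mean: "\<forall>\<^sub>F n in sequentially. (\<Sum>i<n. q i) \<le> n / 2 + C * sqrt n"
    and var: "\<forall>\<^sub>F n in sequentially. c * n \<le> (\<Sum>i<n. q i * (1 - q i))"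
  obtains \<delta> where "\<delta> > 0"
    and "\<And>k. \<forall>\<^sub>F n in sequentially. majority_prob (ones_prefix k q) n \<le> 1 - \<delta>"
proof -
  obtain \<delta> N where "\<delta> > 0" and bound: "\<And>q n. N \<le> n \<Longrightarrow>
      success_mean q {..<n} \<le> n / 2 + (C + 1) * sqrt n \<Longrightarrow>
      c / 2 * n \<le> success_var q {..<n} \<Longrightarrow> majority_prob q n \<le> 1 - \<delta>"
    using majority_prob_bounded_away_from_one[of "c / 2" "C + 1"] \<open>c > 0\<close> by auto
  have "\<forall>\<^sub>F n in sequentially. majority_prob (ones_prefix k q) n \<le> 1 - \<delta>" for k
  proof -
    have "\<forall>\<^sub>F n in sequentially. real k \<le> sqrt n"
      using filterlim_compose[OF sqrt_at_top filterlim_real_sequentially]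
      by (simp add: filterlim_at_top)
    moreover have "\<forall>\<^sub>F n in sequentially. real k \<le> c / 2 * n"
      using filterlim_tendsto_pos_mult_at_top[OF tendsto_const _ filterlim_real_sequentially,
          where c = "c / 2"] \<open>c > 0\<close>
      by (simp add: filterlim_at_top)
    ultimately show ?thesis
      using mean var eventually_ge_at_top[of N]
    proof eventually_elim
      case (elim n)
      then show ?case
        using success_mean_var_ones_prefix[where q = q and k = k and n = n, OF q01]
        by (intro bound) (auto simp: algebra_simps)
    qed
  qed
  with \<open>\<delta> > 0\<close> show ?thesis using that by blast
qed

section \<open>Measurability and a 0-1 law for prefix-invariant events\<close>

lemma majority_prob_eq_sum:
  "majority_prob q n = (\<Sum>X\<in>PiE_dflt {..<n} False (\<lambda>_. UNIV).
     of_bool (real (card {i\<in>{..<n}. X i}) > real n / 2)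
       * (\<Prod>i<n. if X i then clamp01 (q i) else 1 - clamp01 (q i)))"
proof -
  define P where "P = Pi_pmf {..<n} False (\<lambda>i. bernoulli_pmf (q i))"
  define E where "E = {X. real (card {i\<in>{..<n}. X i}) > real n / 2}"
  define W where "W = PiE_dflt {..<n} False (\<lambda>_::nat. UNIV :: bool set)"
  have "finite W"
    unfolding W_def by (intro finite_PiE_dflt) auto
  moreover have "set_pmf P \<subseteq> W"
    unfolding P_def W_def using set_Pi_pmf_subset[of "{..<n}" False] by (auto simp: PiE_dflt_def)
  ultimately have W: "finite W" "set_pmf P \<subseteq> W" .
  have "majority_prob q n = measure_pmf.prob P (E \<inter> set_pmf P)"
    unfolding majority_prob_def P_def E_def by (simp add: measure_Int_set_pmf)
  also have "E \<inter> set_pmf P = (E \<inter> W) \<inter> set_pmf P" using W by auto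
  also have "measure_pmf.prob P \<dots> = sum (pmf P) (E \<inter> W)"
    using W by (simp add: measure_Int_set_pmf measure_measure_pmf_finite)
  also have "\<dots> = (\<Sum>X\<in>W. if X \<in> E then pmf P X else 0)"
    using sum.inter_restrict[OF W(1), of "pmf P" E] by (simp add: Int_commute)
  also have "\<dots> = (\<Sum>X\<in>W. of_bool (real (card {i\<in>{..<n}. X i}) > real n / 2)
       * (\<Prod>i<n. if X i then clamp01 (q i) else 1 - clamp01 (q i)))"
  proof (intro sum.cong refl)
    fix X assume "X \<in> W"
    then have "pmf P X = (\<Prod>i<n. if X i then clamp01 (q i) else 1 - clamp01 (q i))"
      unfolding P_def W_def by (subst pmf_Pi') (auto simp: PiE_dflt_def pmf_bernoulli_pmf_clamp01)
    then show "(if X \<in> E then pmf P X else 0) = of_bool (real (card {i\<in>{..<n}. X i}) > real n / 2)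
        * (\<Prod>i<n. if X i then clamp01 (q i) else 1 - clamp01 (q i))"
      by (simp add: E_def)
  qed
  finally show ?thesis unfolding W_def .
qed

lemma borel_measurable_majority_prob [measurable]:
  assumes [measurable]: "\<And>i. (\<lambda>x. f x i) \<in> borel_measurable M"
  shows "(\<lambda>x. majority_prob (f x) n) \<in> borel_measurable M"
  unfolding majority_prob_eq_sum by measurable

lemma pred_LIMSEQ_real:
  fixes g :: "nat \<Rightarrow> 'a \<Rightarrow> real"
  assumes [measurable]: "\<And>k. g k \<in> borel_measurable M"
  shows "Measurable.pred M (\<lambda>x. (\<lambda>k. g k x) \<longlonglongrightarrow> c)"
proof -
  have "(\<lambda>k. g k x) \<longlonglongrightarrow> c \<longleftrightarrow>
      liminf (\<lambda>k. ereal (g k x)) = ereal c \<and> limsup (\<lambda>k. ereal (g k x)) = ereal c" for x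
    by (simp flip: lim_ereal add: tendsto_iff_Liminf_eq_Limsup)
  then show ?thesis by simp
qed

lemma pred_CJP:
  assumes [measurable]: "\<And>i. (\<lambda>x. f x i) \<in> borel_measurable M"
  shows "Measurable.pred M (\<lambda>x. f x \<in> CJP)"
  unfolding CJP_def by (simp add: pred_LIMSEQ_real)

definition coordinate_events :: "(nat \<Rightarrow> 'a measure) \<Rightarrow> nat \<Rightarrow> (nat \<Rightarrow> 'a) set set" where
  "coordinate_events M i = sigma_sets (space (PiM UNIV M))
     {(\<lambda>x. x i) -` B \<inter> space (PiM UNIV M) | B. B \<in> sets (M i)}"

lemma sigma_algebra_coordinate_events: "sigma_algebra (space (PiM UNIV M)) (coordinate_events M i)"
  unfolding coordinate_events_def by (intro sigma_algebra_sigma_sets) auto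

lemma indep_sets_coordinate_events:
  assumes "\<And>i. prob_space (M i)"
  shows "prob_space.indep_sets (PiM UNIV M) (coordinate_events M) UNIV"
proof -
  interpret PS: product_prob_space M UNIV
    unfolding product_prob_space_def product_prob_space_axioms_def product_sigma_finite_def
    using assms prob_space_imp_sigma_finite by blast
  have "distr (PiM UNIV M) (PiM UNIV M) (\<lambda>x. \<lambda>i\<in>UNIV. x i) =
      PiM UNIV (\<lambda>i. distr (PiM UNIV M) (M i) (\<lambda>x. x i))"
    by (simp add: restrict_UNIV PS.PiM_component cong: PiM_cong)
  then have "PS.indep_vars M (\<lambda>i x. x i) UNIV"
    by (subst PS.indep_vars_iff_distr_eq_PiM) auto
  then show ?thesis
    unfolding PS.indep_vars_def coordinate_events_def by simp
qed

lemma
  fixes M :: "nat \<Rightarrow> 'a measure" and n :: nat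
  defines "N \<equiv> sigma (space (PiM UNIV M)) (\<Union> (coordinate_events M ` {n..}))"
  shows sets_sigma_late_coordinate_events:
      "sets N = sigma_sets (space (PiM UNIV M)) (\<Union> (coordinate_events M ` {n..}))"
    and space_sigma_late_coordinate_events: "space N = space (PiM UNIV M)"
proof -
  have "\<Union> (coordinate_events M ` {n..}) \<subseteq> Pow (space (PiM UNIV M))"
    using sigma_algebra_coordinate_events unfolding sigma_algebra_iff2 by blast
  then show "sets N = sigma_sets (space (PiM UNIV M)) (\<Union> (coordinate_events M ` {n..}))"
    and "space N = space (PiM UNIV M)"
    by (simp_all add: N_def)
qed

lemma measurable_override_prefix:
  fixes M :: "nat \<Rightarrow> 'a measure" and \<omega> :: "nat \<Rightarrow> 'a" and n :: nat
  assumes \<omega>: "\<And>i. \<omega> i \<in> space (M i)"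
  defines "N \<equiv> sigma (space (PiM UNIV M)) (\<Union> (coordinate_events M ` {n..}))"
  shows "(\<lambda>x i. if i < n then \<omega> i else x i) \<in> measurable N (PiM UNIV M)"
proof (rule measurable_PiM_single')
  note sets_N = sets_sigma_late_coordinate_events[of M n, folded N_def]
    and space_N = space_sigma_late_coordinate_events[of M n, folded N_def]
  fix i :: nat
  have "(\<lambda>x. x i) \<in> measurable N (M i)" if "n \<le> i"
  proof (rule measurableI)
    fix x assume "x \<in> space N"
    then show "x i \<in> space (M i)" by (auto simp: space_N space_PiM)
  next
    fix B assume "B \<in> sets (M i)"
    then have "(\<lambda>x. x i) -` B \<inter> space (PiM UNIV M) \<in> \<Union> (coordinate_events M ` {n..})"
      using that unfolding coordinate_events_def by (auto intro: sigma_sets.Basic)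
    then show "(\<lambda>x. x i) -` B \<inter> space N \<in> sets N"
      unfolding sets_N space_N by (rule sigma_sets.Basic)
  qed
  then show "(\<lambda>x. if i < n then \<omega> i else x i) \<in> measurable N (M i)"
    using \<omega> by (cases "i < n") (auto simp: space_N)
next
  show "(\<lambda>x i. if i < n then \<omega> i else x i) \<in> space N \<rightarrow> (\<Pi>\<^sub>E i\<in>UNIV. space (M i))"
    using \<omega> by (auto simp: space_sigma_late_coordinate_events[of M n, folded N_def] space_PiM)
qed

lemma prefix_invariant_in_tail_events:
  fixes M :: "nat \<Rightarrow> 'a measure" and S :: "(nat \<Rightarrow> 'a) set" and \<omega> :: "nat \<Rightarrow> 'a"
  assumes M: "\<And>i. prob_space (M i)"
    and S: "S \<in> sets (PiM UNIV M)" and \<omega>: "\<And>i. \<omega> i \<in> space (M i)"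
    and invariant: "\<And>n x. x \<in> space (PiM UNIV M) \<Longrightarrow> (\<lambda>i. if i < n then \<omega> i else x i) \<in> S \<longleftrightarrow> x \<in> S"
  shows "S \<in> prob_space.tail_events (PiM UNIV M) (coordinate_events M)"
proof -
  interpret prob_space "PiM UNIV M"
    using M by (rule prob_space_PiM)
  have "S \<in> sigma_sets (space (PiM UNIV M)) (\<Union> (coordinate_events M ` {n..}))" for n
  proof -
    let ?N = "sigma (space (PiM UNIV M)) (\<Union> (coordinate_events M ` {n..}))"
    let ?h = "\<lambda>x i. if i < n then \<omega> i else x i"
    have "?h -` S \<inter> space ?N \<in> sets ?N"
      using measurable_override_prefix[OF \<omega>] S by (rule measurable_sets)
    also have "?h -` S \<inter> space ?N = S"
      using invariant sets.sets_into_space[OF S] by (auto simp: space_sigma_late_coordinate_events)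
    finally show ?thesis
      unfolding sets_sigma_late_coordinate_events .
  qed
  then show ?thesis
    unfolding tail_events_def by blast
qed

lemma prob_PiM_prefix_invariant_zero_one:
  fixes M :: "nat \<Rightarrow> 'a measure" and S :: "(nat \<Rightarrow> 'a) set" and \<omega> :: "nat \<Rightarrow> 'a"
  assumes "\<And>i. prob_space (M i)" "S \<in> sets (PiM UNIV M)" "\<And>i. \<omega> i \<in> space (M i)"
    and "\<And>n x. x \<in> space (PiM UNIV M) \<Longrightarrow> (\<lambda>i. if i < n then \<omega> i else x i) \<in> S \<longleftrightarrow> x \<in> S"
  shows "measure (PiM UNIV M) S = 0 \<or> measure (PiM UNIV M) S = 1"
proof -
  interpret prob_space "PiM UNIV M"
    using assms(1) by (rule prob_space_PiM)
  show ?thesis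
    using kolmogorov_0_1_law[OF sigma_algebra_coordinate_events indep_sets_coordinate_events[OF assms(1)]
        prefix_invariant_in_tail_events[OF assms]] .
qed

definition CJP_tail :: "(nat \<Rightarrow> real) set" where
  "CJP_tail = {p. \<exists>k. ones_prefix k p \<in> CJP}"

lemma CJP_subset_CJP_tail: "CJP \<subseteq> CJP_tail"
  unfolding CJP_tail_def by (auto intro: exI[of _ 0])

lemma CJP_tail_modify_prefix:
  "(\<lambda>i. if i < n then y i else p i) \<in> CJP_tail \<longleftrightarrow> p \<in> CJP_tail"
proof -
  have eq: "ones_prefix k (\<lambda>i. if i < n then y i else p i) = ones_prefix k p" if "n \<le> k" for k
    unfolding ones_prefix_def using that by (intro ext) simp
  have late: "r \<in> CJP_tail \<longleftrightarrow> (\<exists>k\<ge>n. ones_prefix k r \<in> CJP)" for r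
  proof
    assume "r \<in> CJP_tail"
    then obtain k where "ones_prefix k r \<in> CJP" unfolding CJP_tail_def by blast
    then have "ones_prefix (max k n) r \<in> CJP" by (rule ones_prefix_in_CJP_mono[rotated]) simp
    then show "\<exists>k\<ge>n. ones_prefix k r \<in> CJP" by (intro exI[of _ "max k n"]) simp
  qed (unfold CJP_tail_def, blast)
  show ?thesis
    unfolding late by (auto simp: eq)
qed

lemma eventually_less_of_limsup_less_infinity:
  fixes f :: "nat \<Rightarrow> real"
  assumes "limsup (\<lambda>n. ereal (f n)) < \<infinity>"
  obtains C where "\<forall>\<^sub>F n in sequentially. f n < C"
proof -
  have "\<exists>r::nat. limsup (\<lambda>n. ereal (f n)) < ereal (real r)"
    using assms less_PInf_Ex_of_nat by simp
  then obtain r :: nat where "limsup (\<lambda>n. ereal (f n)) < ereal (real r)" by (rule exE)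
  then have "\<forall>\<^sub>F n in sequentially. ereal (f n) < ereal (real r)" by (rule Limsup_lessD)
  then show ?thesis by (intro that[of "real r"]) simp
qed

lemma eventually_greater_of_liminf_pos:
  fixes f :: "nat \<Rightarrow> real"
  assumes "liminf (\<lambda>n. ereal (f n)) > 0"
  obtains c where "c > 0" "\<forall>\<^sub>F n in sequentially. c < f n"
proof -
  obtain c where c: "0 < ereal c \<and> ereal c < liminf (\<lambda>n. ereal (f n))"
    using ereal_dense2[OF assms] by (rule exE)
  then have "\<forall>\<^sub>F n in sequentially. ereal c < ereal (f n)" by (intro less_LiminfD) simp
  with c show ?thesis by (intro that[of c]) simp_all
qed

lemma eventually_sum_le_of_limsup:
  fixes q :: "nat \<Rightarrow> real"
  assumes "limsup (\<lambda>n. ereal (1 / sqrt (real n) * (\<Sum>i<n. q i - 1 / 2))) < \<infinity>"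
  obtains C where "\<forall>\<^sub>F n in sequentially. (\<Sum>i<n. q i) \<le> n / 2 + C * sqrt n"
proof -
  obtain C where "\<forall>\<^sub>F n in sequentially. 1 / sqrt (real n) * (\<Sum>i<n. q i - 1 / 2) < C"
    using eventually_less_of_limsup_less_infinity[OF assms] by blast
  moreover have "(\<Sum>i<n. q i) \<le> n / 2 + C * sqrt n"
    if "1 / sqrt (real n) * (\<Sum>i<n. q i - 1 / 2) < C" for n
  proof (cases "n = 0")
    case False
    then have "(\<Sum>i<n. q i - 1 / 2) < C * sqrt n"
      using that by (simp add: field_simps)
    moreover have "(\<Sum>i<n. q i - 1 / 2) = (\<Sum>i<n. q i) - n / 2"
      by (simp add: sum_subtractf)
    ultimately show ?thesis by simp
  qed simp
  ultimately have "\<forall>\<^sub>F n in sequentially. (\<Sum>i<n. q i) \<le> n / 2 + C * sqrt n"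
    by (rule eventually_mono)
  then show ?thesis by (rule that)
qed

section \<open>Product measures on \<open>[0,1]\<^sup>\<nat>\<close>\<close>

locale unit_interval_product =
  fixes \<nu> :: "nat \<Rightarrow> real measure"
  assumes prob_space_\<nu>: "prob_space (\<nu> i)"
    and sets_\<nu>: "sets (\<nu> i) = sets borel"
    and AE_\<nu>_unit: "AE x in \<nu> i. x \<in> {0..1}"
begin

sublocale product_prob_space \<nu> UNIV
  unfolding product_prob_space_def product_prob_space_axioms_def product_sigma_finite_def
  using prob_space_\<nu> prob_space_imp_sigma_finite by blast

definition mean :: "nat \<Rightarrow> real" where
  "mean i = (\<integral>x. x \<partial>\<nu> i)"

lemma space_PiM_\<nu>: "space (PiM UNIV \<nu>) = UNIV"
  using sets_eq_imp_space_eq[OF sets_\<nu>] by (auto simp: space_PiM)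

lemma borel_measurable_\<nu>: "f \<in> borel_measurable borel \<Longrightarrow> f \<in> borel_measurable (\<nu> i)"
  by (simp add: measurable_cong_sets[OF sets_\<nu> refl])

lemma borel_measurable_coordinate [measurable]: "(\<lambda>p. p i) \<in> borel_measurable (PiM UNIV \<nu>)"
  using measurable_component_singleton[of i UNIV \<nu>] by (simp add: measurable_cong_sets[OF refl sets_\<nu>])

lemma integrable_\<nu>_bounded:
  fixes f :: "real \<Rightarrow> real" and B :: real
  assumes "f \<in> borel_measurable borel" "AE x in \<nu> i. \<bar>f x\<bar> \<le> B"
  shows "integrable (\<nu> i) f"
proof -
  have "AE x in \<nu> i. norm (f x) \<le> B" using assms(2) by simp
  then show ?thesis
    using finite_measure.integrable_const_bound[OF prob_space.finite_measure[OF prob_space_\<nu>]]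
      borel_measurable_\<nu>[OF assms(1)] by blast
qed

lemma integral_clamp01: "(\<integral>x. clamp01 x \<partial>\<nu> i) = mean i"
  unfolding mean_def using AE_\<nu>_unit[of i]
  by (intro integral_cong_AE) (auto intro: borel_measurable_\<nu> elim: eventually_mono)

lemma mean_in_unit: "mean i \<in> {0..1}"
proof -
  have "integrable (\<nu> i) clamp01"
    by (intro integrable_\<nu>_bounded[where B = 1] AE_I2) (auto simp: abs_le_iff)
  then have "0 \<le> (\<integral>x. clamp01 x \<partial>\<nu> i)" "(\<integral>x. clamp01 x \<partial>\<nu> i) \<le> 1"
    by (intro prob_space.integral_ge_const prob_space.integral_le_const prob_space_\<nu> AE_I2; simp)+
  then show ?thesis by (simp add: integral_clamp01)
qed

lemma mean_minus_second_moment_le: "mean i - (\<integral>x. x^2 \<partial>\<nu> i) \<le> mean i * (1 - mean i)"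
proof -
  have "AE x in \<nu> i. \<bar>x\<bar> \<le> 1"
    using AE_\<nu>_unit[of i] by eventually_elim simp
  then have int1: "integrable (\<nu> i) (\<lambda>x. x)"
    by (rule integrable_\<nu>_bounded[rotated]) simp
  have "AE x in \<nu> i. \<bar>x^2\<bar> \<le> 1"
    using AE_\<nu>_unit[of i] by eventually_elim (simp add: abs_le_iff power_le_one)
  then have int2: "integrable (\<nu> i) (\<lambda>x. x^2)"
    by (rule integrable_\<nu>_bounded[rotated]) simp
  have "0 \<le> (\<integral>x. (x - mean i)^2 \<partial>\<nu> i)"
    by (rule integral_nonneg_AE) (rule AE_I2, rule zero_le_power2)
  also have "\<dots> = (\<integral>x. x^2 \<partial>\<nu> i) - (mean i)^2"
    unfolding mean_def by (rule prob_space.variance_eq[OF prob_space_\<nu> int1 int2])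
  finally show ?thesis by (simp add: power2_eq_square algebra_simps)
qed

lemma sets_CJP: "CJP \<in> sets (PiM UNIV \<nu>)"
  using pred_CJP[of "\<lambda>p. p" "PiM UNIV \<nu>"] by (simp add: pred_def space_PiM_\<nu>)

lemma sets_ones_prefix_CJP: "{p. ones_prefix k p \<in> CJP} \<in> sets (PiM UNIV \<nu>)"
  using pred_CJP[of "ones_prefix k" "PiM UNIV \<nu>"] by (simp add: pred_def space_PiM_\<nu> ones_prefix_def)

lemma sets_CJP_tail: "CJP_tail \<in> sets (PiM UNIV \<nu>)"
proof -
  have "CJP_tail = (\<Union>k. {p. ones_prefix k p \<in> CJP})"
    by (auto simp: CJP_tail_def)
  also have "\<dots> \<in> sets (PiM UNIV \<nu>)"
    using sets_ones_prefix_CJP by (intro sets.countable_UN) auto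
  finally show ?thesis .
qed

lemma measure_CJP_tail_zero_one:
  "measure (PiM UNIV \<nu>) CJP_tail = 0 \<or> measure (PiM UNIV \<nu>) CJP_tail = 1"
  by (rule prob_PiM_prefix_invariant_zero_one[where \<omega> = "\<lambda>_. 0"])
     (auto simp: prob_space_\<nu> sets_CJP_tail space_PiM_\<nu> sets_eq_imp_space_eq[OF sets_\<nu>]
        CJP_tail_modify_prefix)

lemma integral_prod_coordinates:
  fixes \<phi> :: "nat \<Rightarrow> real \<Rightarrow> real"
  assumes "finite J" "\<And>i. \<phi> i \<in> borel_measurable borel" "\<And>i x. \<bar>\<phi> i x\<bar> \<le> 1"
  shows "(\<integral>p. (\<Prod>i\<in>J. \<phi> i (p i)) \<partial>PiM UNIV \<nu>) = (\<Prod>i\<in>J. \<integral>x. \<phi> i x \<partial>\<nu> i)"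
proof -
  have meas: "(\<lambda>x. \<Prod>i\<in>J. \<phi> i (x i)) \<in> borel_measurable (PiM J \<nu>)"
  proof (intro borel_measurable_prod)
    fix i assume "i \<in> J"
    then have "(\<lambda>x. x i) \<in> measurable (PiM J \<nu>) (\<nu> i)" by (rule measurable_component_singleton)
    then show "(\<lambda>x. \<phi> i (x i)) \<in> borel_measurable (PiM J \<nu>)"
      using borel_measurable_\<nu>[OF assms(2)] by (rule measurable_compose)
  qed
  have "(\<integral>p. (\<Prod>i\<in>J. \<phi> i (p i)) \<partial>PiM UNIV \<nu>) =
      (\<integral>p. (\<lambda>x. \<Prod>i\<in>J. \<phi> i (x i)) (restrict p J) \<partial>PiM UNIV \<nu>)"
    by (intro Bochner_Integration.integral_cong refl prod.cong) auto
  also have "\<dots> = integral\<^sup>L (distr (PiM UNIV \<nu>) (PiM J \<nu>) (\<lambda>p. restrict p J)) (\<lambda>x. \<Prod>i\<in>J. \<phi> i (x i))"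
    by (rule integral_distr[symmetric, OF measurable_restrict_subset meas]) simp
  also have "distr (PiM UNIV \<nu>) (PiM J \<nu>) (\<lambda>p. restrict p J) = PiM J \<nu>"
    using assms(1) by (intro distr_PiM_restrict_finite) auto
  also have "integral\<^sup>L (PiM J \<nu>) (\<lambda>x. \<Prod>i\<in>J. \<phi> i (x i)) = (\<Prod>i\<in>J. \<integral>x. \<phi> i x \<partial>\<nu> i)"
    using assms by (intro product_integral_prod integrable_\<nu>_bounded[where B = 1]) auto
  finally show ?thesis .
qed

lemma integrable_clamp01: "g \<in> borel_measurable borel \<Longrightarrow> integrable (\<nu> i) (\<lambda>x. clamp01 (g x))"
  by (intro integrable_\<nu>_bounded[where B = 1] AE_I2) (auto simp: abs_le_iff)

lemma integral_clamp01_in_unit: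
  "g \<in> borel_measurable borel \<Longrightarrow> (\<integral>x. clamp01 (g x) \<partial>\<nu> i) \<in> {0..1}"
  by (auto intro!: prob_space.integral_ge_const prob_space.integral_le_const prob_space_\<nu> AE_I2
      integrable_clamp01)

lemma integral_majority_prob:
  assumes [measurable]: "\<And>i. g i \<in> borel_measurable borel"
  shows "(\<integral>p. majority_prob (\<lambda>i. g i (p i)) n \<partial>PiM UNIV \<nu>)
           = majority_prob (\<lambda>i. \<integral>x. clamp01 (g i x) \<partial>\<nu> i) n"
proof -
  define \<phi> where "\<phi> = (\<lambda>X i x. if X i then clamp01 (g i x) else 1 - clamp01 (g i x))"
  have \<phi>: "\<phi> X i \<in> borel_measurable borel" "\<bar>\<phi> X i x\<bar> \<le> 1" for X i x
    unfolding \<phi>_def by (cases "X i"; simp add: abs_le_iff; measurable)+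
  have integral_\<phi>: "(\<integral>x. \<phi> X i x \<partial>\<nu> i) = (if X i then clamp01 (\<integral>x. clamp01 (g i x) \<partial>\<nu> i)
      else 1 - clamp01 (\<integral>x. clamp01 (g i x) \<partial>\<nu> i))" for X i
    using integral_clamp01_in_unit[of "g i" i] integrable_clamp01[of "g i" i]
      finite_measure.integrable_const[OF prob_space.finite_measure[OF prob_space_\<nu>]]
    by (simp add: \<phi>_def prob_space.prob_space[OF prob_space_\<nu>] Bochner_Integration.integral_diff)
  have integrable: "integrable (PiM UNIV \<nu>) (\<lambda>p. \<Prod>i<n. \<phi> X i (p i))" for X
    using \<phi> by (intro P.integrable_const_bound[where B = 1] AE_I2)
      (auto simp: abs_prod intro!: prod_le_1 borel_measurable_prod measurable_compose[OF _ \<phi>(1)])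
  have "(\<integral>p. majority_prob (\<lambda>i. g i (p i)) n \<partial>PiM UNIV \<nu>) =
      (\<integral>p. (\<Sum>X\<in>PiE_dflt {..<n} False (\<lambda>_. UNIV). of_bool (real (card {i\<in>{..<n}. X i}) > real n / 2)
        * (\<Prod>i<n. \<phi> X i (p i))) \<partial>PiM UNIV \<nu>)"
    by (simp add: majority_prob_eq_sum \<phi>_def)
  also have "\<dots> = (\<Sum>X\<in>PiE_dflt {..<n} False (\<lambda>_. UNIV). of_bool (real (card {i\<in>{..<n}. X i}) > real n / 2)
        * (\<Prod>i<n. \<integral>x. \<phi> X i x \<partial>\<nu> i))"
    using integrable by (simp add: integral_prod_coordinates \<phi>)
  also have "\<dots> = majority_prob (\<lambda>i. \<integral>x. clamp01 (g i x) \<partial>\<nu> i) n"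
    by (simp add: majority_prob_eq_sum integral_\<phi>)
  finally show ?thesis .
qed

lemma integral_majority_prob_ones_prefix:
  "(\<integral>p. majority_prob (ones_prefix k p) n \<partial>PiM UNIV \<nu>) = majority_prob (ones_prefix k mean) n"
proof -
  define g where "g = (\<lambda>i. if i < k then (\<lambda>_. 1) else (\<lambda>x::real. x))"
  have [measurable]: "g i \<in> borel_measurable borel" for i
    by (simp add: g_def)
  have "ones_prefix k p = (\<lambda>i. g i (p i))" for p
    by (simp add: g_def ones_prefix_def fun_eq_iff)
  moreover have "(\<lambda>i. \<integral>x. clamp01 (g i x) \<partial>\<nu> i) = ones_prefix k mean"
    by (simp add: g_def ones_prefix_def fun_eq_iff integral_clamp01 prob_space.prob_space[OF prob_space_\<nu>])
  ultimately show ?thesis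
    using integral_majority_prob[of g n] by simp
qed

lemma measure_ones_prefix_CJP_le:
  assumes "\<forall>\<^sub>F n in sequentially. majority_prob (ones_prefix k mean) n \<le> 1 - \<delta>"
  shows "measure (PiM UNIV \<nu>) {p. ones_prefix k p \<in> CJP} \<le> 1 - \<delta>"
proof -
  let ?U = "{p. ones_prefix k p \<in> CJP}"
  define f where "f = (\<lambda>j p. indicator ?U p * majority_prob (ones_prefix k p) (2 * j + 1))"
  have [measurable]: "(\<lambda>p. ones_prefix k p i) \<in> borel_measurable (PiM UNIV \<nu>)" for i
    by (simp add: ones_prefix_def)
  have U [measurable]: "?U \<in> sets (PiM UNIV \<nu>)"
    by (rule sets_ones_prefix_CJP)
  have [measurable]: "Measurable.pred (PiM UNIV \<nu>) (\<lambda>p. ones_prefix k p \<in> CJP)"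
    by (rule pred_CJP) simp
  have f_meas: "f j \<in> borel_measurable (PiM UNIV \<nu>)" for j
    unfolding f_def by measurable
  have "(\<lambda>j. \<integral>p. f j p \<partial>PiM UNIV \<nu>) \<longlonglongrightarrow> (\<integral>p. indicator ?U p \<partial>PiM UNIV \<nu>)"
  proof (rule integral_dominated_convergence[where w = "\<lambda>_. 1"])
    show "AE p in PiM UNIV \<nu>. (\<lambda>j. f j p) \<longlonglongrightarrow> indicator ?U p"
      by (intro AE_I2) (auto simp: f_def CJP_def indicator_def)
    show "AE p in PiM UNIV \<nu>. norm (f j p) \<le> 1" for j
      by (intro AE_I2) (auto simp: f_def indicator_def majority_prob_le_1 majority_prob_nonneg)
  qed (use f_meas in simp_all)
  moreover have "\<forall>\<^sub>F j in sequentially. (\<integral>p. f j p \<partial>PiM UNIV \<nu>) \<le> 1 - \<delta>"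
  proof -
    have ev: "\<forall>\<^sub>F j in sequentially. majority_prob (ones_prefix k mean) (2 * j + 1) \<le> 1 - \<delta>"
      using eventually_compose_filterlim[OF assms filterlim_subseq, of "\<lambda>j. 2 * j + 1"]
      by (simp add: strict_mono_def)
    have bound: "(\<integral>p. f j p \<partial>PiM UNIV \<nu>) \<le> majority_prob (ones_prefix k mean) (2 * j + 1)" for j
    proof -
      have "(\<integral>p. f j p \<partial>PiM UNIV \<nu>) \<le> (\<integral>p. majority_prob (ones_prefix k p) (2 * j + 1) \<partial>PiM UNIV \<nu>)"
        by (intro integral_mono P.integrable_const_bound[where B = 1] AE_I2)
           (auto simp: f_def indicator_def majority_prob_le_1 majority_prob_nonneg)
      then show ?thesis by (simp add: integral_majority_prob_ones_prefix)
    qed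
    show ?thesis
      using ev by (rule eventually_mono) (use bound in \<open>rule order_trans\<close>)
  qed
  ultimately have "(\<integral>p. indicator ?U p \<partial>PiM UNIV \<nu>) \<le> 1 - \<delta>"
    by (rule tendsto_upperbound) simp
  then show ?thesis by simp
qed

lemma measure_CJP_tail_le:
  assumes "\<And>k. \<forall>\<^sub>F n in sequentially. majority_prob (ones_prefix k mean) n \<le> 1 - \<delta>"
  shows "measure (PiM UNIV \<nu>) CJP_tail \<le> 1 - \<delta>"
proof -
  let ?U = "\<lambda>k. {p. ones_prefix k p \<in> CJP}"
  have "incseq ?U"
    by (intro monoI subsetI) (auto intro: ones_prefix_in_CJP_mono)
  then have "(\<lambda>k. measure (PiM UNIV \<nu>) (?U k)) \<longlonglongrightarrow> measure (PiM UNIV \<nu>) (\<Union>k. ?U k)"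
    using sets_ones_prefix_CJP by (intro Lim_measure_incseq) auto
  moreover have "CJP_tail = (\<Union>k. ?U k)"
    by (auto simp: CJP_tail_def)
  ultimately show ?thesis
    using measure_ones_prefix_CJP_le[OF assms] by (auto intro: LIMSEQ_le_const2)
qed

lemma measure_CJP_eq_0:
  assumes "\<delta> > 0" "\<And>k. \<forall>\<^sub>F n in sequentially. majority_prob (ones_prefix k mean) n \<le> 1 - \<delta>"
  shows "measure (PiM UNIV \<nu>) CJP = 0"
proof -
  have "measure (PiM UNIV \<nu>) CJP_tail = 0"
    using measure_CJP_tail_zero_one measure_CJP_tail_le[OF assms(2)] assms(1) by auto
  moreover have "measure (PiM UNIV \<nu>) CJP \<le> measure (PiM UNIV \<nu>) CJP_tail"
    using CJP_subset_CJP_tail sets_CJP_tail by (intro P.finite_measure_mono)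
  ultimately show ?thesis
    using measure_nonneg[of "PiM UNIV \<nu>" CJP] by linarith
qed

lemma eventually_sum_mean_var_ge:
  assumes "liminf (\<lambda>n. ereal (1 / real n * (\<Sum>i<n. mean i - (\<integral>x. x^2 \<partial>\<nu> i)))) > 0"
  obtains c :: real where "c > 0" "\<forall>\<^sub>F n in sequentially. c * n \<le> (\<Sum>i<n. mean i * (1 - mean i))"
proof -
  obtain c where c: "c > 0"
    and ev: "\<forall>\<^sub>F n in sequentially. c < 1 / real n * (\<Sum>i<n. mean i - (\<integral>x. x^2 \<partial>\<nu> i))"
    using eventually_greater_of_liminf_pos[OF assms] by blast
  have bound: "c * n \<le> (\<Sum>i<n. mean i * (1 - mean i))"
    if "c < 1 / real n * (\<Sum>i<n. mean i - (\<integral>x. x^2 \<partial>\<nu> i))" for n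
  proof -
    have "n \<noteq> 0" using that c by (cases n) auto
    then have "c * n \<le> (\<Sum>i<n. mean i - (\<integral>x. x^2 \<partial>\<nu> i))"
      using that by (simp add: field_simps)
    also have "\<dots> \<le> (\<Sum>i<n. mean i * (1 - mean i))"
      by (intro sum_mono mean_minus_second_moment_le)
    finally show ?thesis .
  qed
  have "\<forall>\<^sub>F n in sequentially. c * n \<le> (\<Sum>i<n. mean i * (1 - mean i))"
    using ev by (rule eventually_mono) (rule bound)
  then show ?thesis by (rule that[OF c])
qed

end

theorem theorem4:
  fixes \<nu> :: "nat \<Rightarrow> real measure"
  assumes prob: "\<And>i. prob_space (\<nu> i)"
    and sets: "\<And>i. sets (\<nu> i) = sets borel"
    and supp: "\<And>i. AE x in \<nu> i. x \<in> {0..1}"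
    and h1: "limsup (\<lambda>n. ereal (1 / sqrt (real n) *
               (\<Sum>i<n. ((\<integral>x. x \<partial>\<nu> i) - 1 / 2)))) < \<infinity>"
    and h2: "liminf (\<lambda>n. ereal (1 / real n *
               (\<Sum>i<n. ((\<integral>x. x \<partial>\<nu> i) - (\<integral>x. x ^ 2 \<partial>\<nu> i))))) > 0"
    and h3: "limsup (\<lambda>n. ereal (1 / real n * (\<Sum>i<n. measure (\<nu> i) {1}))) < ereal (1 / 2)"
    and h4: "filterlim (\<lambda>n. sqrt (\<Sum>i<n. \<integral>x. (x - (\<integral>y. y \<partial>\<nu> i)) ^ 2 \<partial>\<nu> i))
               at_top sequentially"
  shows "CJP \<in> sets (PiM UNIV \<nu>) \<and> measure (PiM UNIV \<nu>) CJP = 0"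
proof -
  interpret unit_interval_product \<nu>
    using prob sets supp by (simp add: unit_interval_product_def)
  obtain C where mean: "\<forall>\<^sub>F n in sequentially. (\<Sum>i<n. mean i) \<le> n / 2 + C * sqrt n"
    using h1 unfolding mean_def[symmetric] by (rule eventually_sum_le_of_limsup)
  obtain c :: real where "c > 0" and var: "\<forall>\<^sub>F n in sequentially. c * n \<le> (\<Sum>i<n. mean i * (1 - mean i))"
    using h2 unfolding mean_def[symmetric] by (rule eventually_sum_mean_var_ge)
  obtain \<delta> where "\<delta> > 0"
    and "\<And>k. \<forall>\<^sub>F n in sequentially. majority_prob (ones_prefix k mean) n \<le> 1 - \<delta>"
    using eventually_majority_prob_ones_prefix_le[OF mean_in_unit \<open>c > 0\<close> mean var] by blast
  then show ?thesis
    using sets_CJP measure_CJP_eq_0 by blast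
qed

end
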